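(* Let $m,n$ be positive integers. Then $S_{mn+1}\equiv4(mn+1)S_{mn}\pmod{m^2n^2}$.
   Context: $(S_n)_{n\ge0}$ is the integer sequence defined by $S_0=1$, $S_1=4$ and $(n+1)^2S_{n+1}=4(3n^2+3n+1)S_n-32n^2S_{n-1}$ for $n\ge1$; equivalently $S_n=\sum_{k=0}^n\binom nk\binom{2k}k\binom{2n-2k}{n-k}$. *)

theory Defs
  imports Main "HOL-Number_Theory.Cong"
begin

definition S :: "nat \<Rightarrow> int" where
  "S n = (\<Sum>k=0..n. int (n choose k) * int ((2*k) choose k) * int ((2*n - 2*k) choose (n - k)))"

end

theory Submission
  imports Complex_Main Defs
begin

text \<open>The summand \<open>F(n,k)\<close> of \<open>S(n)\<close> is hypergeometric in both \<open>n\<close> and \<open>k\<close>, so creative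
  telescoping yields an explicit \<open>G(n,k)\<close> with
  \<open>(n+1)\<^sup>2 F(n+1,k) - 4(3n\<^sup>2+3n+1) F(n,k) + 32n\<^sup>2 F(n-1,k) = G(n,k+1) - G(n,k)\<close>;
  summing over \<open>k\<close> gives the three-term recurrence of \<open>S\<close>. For \<open>N = mn\<close> the recurrence can be
  rewritten as \<open>(N+1)\<^sup>2 (S(N+1) - 4(N+1) S(N)) = -N\<^sup>2 (4N S(N) + 32 S(N-1))\<close>, and since \<open>N\<^sup>2\<close> is
  coprime to \<open>(N+1)\<^sup>2\<close>, it divides \<open>S(N+1) - 4(N+1) S(N)\<close>.\<close>

definition S_term :: "nat \<Rightarrow> nat \<Rightarrow> real" where
  "S_term n k = real (n choose k) * real ((2*k) choose k) * real ((2*n - 2*k) choose (n - k))"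

definition S_term_sym :: "nat \<Rightarrow> nat \<Rightarrow> real" where
  "S_term_sym i j = fact (i + j) * fact (2*i) * fact (2*j) / (fact i ^ 3 * fact j ^ 3)"

lemma S_term_sym_commute: "S_term_sym i j = S_term_sym j i"
  unfolding S_term_sym_def by (simp add: ac_simps)

lemma S_term_sym_Suc_left:
  "(real i + 1)^2 * S_term_sym (Suc i) j = 2 * (real i + real j + 1) * (2 * real i + 1) * S_term_sym i j"
proof -
  have "2 * Suc i = Suc (Suc (2 * i))" by simp
  then have "S_term_sym (Suc i) j
      = (real i + real j + 1) * (2 * (real i + 1)) * (2 * real i + 1) / (real i + 1)^3 * S_term_sym i j"
    unfolding S_term_sym_def by (simp add: field_simps power3_eq_cube)
  moreover have "c \<noteq> 0 \<Longrightarrow> c^2 * (a * (2 * c) * b / c^3 * x) = 2 * a * b * x" for a b c x :: real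
    by (simp add: field_simps power2_eq_square power3_eq_cube)
  ultimately show ?thesis
    by (metis of_nat_Suc of_nat_neq_0 add.commute)
qed

lemma S_term_sym_Suc_right:
  "(real j + 1)^2 * S_term_sym i (Suc j) = 2 * (real i + real j + 1) * (2 * real j + 1) * S_term_sym i j"
  using S_term_sym_Suc_left[of j i] by (simp add: S_term_sym_commute ac_simps)

lemma S_term_add_eq_sym: "S_term (k + j) k = S_term_sym k j"
proof -
  have central: "real (2*m choose m) = fact (2*m) / (fact m * fact m)" for m
    using binomial_fact[of m "2*m", where 'a=real] by simp
  have binom: "real (k + j choose k) = fact (k + j) / (fact k * fact j)"
    using binomial_fact[of k "k + j", where 'a=real] by simp
  have diffs: "2*(k + j) - 2*k = 2*j" "k + j - k = j" by simp_all
  show ?thesis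
    unfolding S_term_def S_term_sym_def diffs binom central by (simp add: field_simps power3_eq_cube)
qed

lemma S_term_eq_sym: "k \<le> n \<Longrightarrow> S_term n k = S_term_sym k (n - k)"
  using S_term_add_eq_sym[of k "n - k"] by simp

lemma S_term_eq_0: "n < k \<Longrightarrow> S_term n k = 0"
  unfolding S_term_def by simp

lemma S_term_Suc_row:
  "2 * (real n + 1) * (2 * real n - 2 * real k + 1) * S_term n k
     = (real n + 1 - real k)^2 * S_term (Suc n) k"
proof (cases "k \<le> n")
  case True
  then have "Suc n - k = Suc (n - k)" by simp
  then show ?thesis
    using S_term_sym_Suc_right[of "n - k" k] True
    by (simp add: S_term_eq_sym of_nat_diff algebra_simps)
next
  case False
  then show ?thesis
    by (cases "k = Suc n") (simp_all add: S_term_eq_0)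
qed

lemma S_term_Suc_col:
  "(real k + 1)^2 * (2 * real n - 2 * real k - 1) * S_term n (Suc k)
     = (real n - real k)^2 * (2 * real k + 1) * S_term n k"
proof (cases "k < n")
  case True
  define j where "j = n - Suc k"
  have n: "n = k + Suc j" "real n = real k + real j + 1" using True unfolding j_def by simp_all
  have "(2 * real j + 1) * ((real k + 1)^2 * S_term_sym (Suc k) j)
      = (2 * real k + 1) * ((real j + 1)^2 * S_term_sym k (Suc j))"
    unfolding S_term_sym_Suc_left S_term_sym_Suc_right by simp
  then show ?thesis
    by (simp add: S_term_eq_sym n algebra_simps)
next
  case False
  then show ?thesis
    by (cases "k = n") (simp_all add: S_term_eq_0)
qed

lemma odd_real_neq_0: "2 * real_of_int z + 1 \<noteq> 0"
proof
  assume "2 * real_of_int z + 1 = 0"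
  then have "real_of_int (2 * z + 1) = 0" by simp
  then show False by presburger
qed

lemma mult_times_div_cancel: "d \<noteq> 0 \<Longrightarrow> p * (d * q) / d = p * (q :: 'a :: field)"
  by simp

text \<open>The certificate \<open>G(n, j+1)\<close> produced by Zeilberger's algorithm.\<close>

definition S_certificate :: "nat \<Rightarrow> nat \<Rightarrow> real" where
  "S_certificate n j = (8 * real n * (real j + 1)^2 - (8 * (real n)^2 + 8 * real n - 4) * (real j + 1)
     + 4 * (real n)^2 + 2 * real n - 2) * S_term n j / (2 * real n - 2 * real j - 1)"

lemma S_term_recurrence_0:
  assumes "n \<ge> 1"
  shows "(real n + 1)^2 * S_term (Suc n) 0 - 4 * (3 * (real n)^2 + 3 * real n + 1) * S_term n 0
     + 32 * (real n)^2 * S_term (n - 1) 0 = S_certificate n 0"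
proof -
  obtain m where n: "n = Suc m" using assms by (cases n) auto
  define x where "x = real n"
  define w where "w = S_term n 0 / ((2 * x - 1) * (2 * (x + 1)))"
  have nz: "x \<noteq> 0" "x + 1 \<noteq> 0" "2 * x - 1 \<noteq> 0"
    using assms odd_real_neq_0[of "int n - 1"] unfolding x_def by simp_all
  have F0: "S_term n 0 = (2 * x - 1) * (2 * (x + 1) * w)"
    unfolding w_def using nz by simp
  have "2 * x * (2 * x - 1) * S_term (n - 1) 0 = x^2 * S_term n 0"
    using S_term_Suc_row[of m 0] unfolding x_def by (simp add: n algebra_simps)
  also have "\<dots> = 2 * x * (2 * x - 1) * (x * (x + 1) * w)"
    unfolding F0 by algebra
  finally have Fprev: "S_term (n - 1) 0 = x * (x + 1) * w"
    using nz by simp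
  have "(x + 1)^2 * S_term (Suc n) 0 = 2 * (x + 1) * (2 * x + 1) * S_term n 0"
    using S_term_Suc_row[of n 0] unfolding x_def by simp
  also have "\<dots> = (x + 1)^2 * (4 * (2 * x + 1) * (2 * x - 1) * w)"
    unfolding F0 by algebra
  finally have Fsucc: "S_term (Suc n) 0 = 4 * (2 * x + 1) * (2 * x - 1) * w"
    using nz by simp
  have shift: "real 0 = 0" "2 * x - 2 * 0 - 1 = 2 * x - 1" by simp_all
  show ?thesis
    unfolding S_certificate_def x_def[symmetric] Fprev Fsucc F0 shift mult_times_div_cancel[OF nz(3)]
    by (simp add: algebra_simps power2_eq_square)
qed

lemma S_term_recurrence_Suc:
  assumes "n \<ge> 1"
  shows "(real n + 1)^2 * S_term (Suc n) (Suc j)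
     - 4 * (3 * (real n)^2 + 3 * real n + 1) * S_term n (Suc j) + 32 * (real n)^2 * S_term (n - 1) (Suc j) = S_certificate n (Suc j) - S_certificate n j"
proof -
  obtain m where n: "n = Suc m" using assms by (cases n) auto
  define x y where "x = real n" and "y = real j"
  \<comment> \<open>normalised so that every term of the identity is a polynomial multiple of \<open>w\<close>\<close>
  define w where "w = S_term (Suc n) j
    / (4 * x * (x + 1) * (y + 1)^2 * (2 * x - 2 * y + 1) * (2 * x - 2 * y - 1) * (2 * x - 2 * y - 3))"
  have nz: "x \<noteq> 0" "x + 1 \<noteq> 0" "y + 1 \<noteq> 0"
    "2 * x - 2 * y + 1 \<noteq> 0" "2 * x - 2 * y - 1 \<noteq> 0" "2 * x - 2 * y - 3 \<noteq> 0"
    using assms odd_real_neq_0[of "int n - int j"] odd_real_neq_0[of "int n - int j - 1"]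
      odd_real_neq_0[of "int n - int j - 2"]
    unfolding x_def y_def by (simp_all add: algebra_simps)
  have F0: "S_term (Suc n) j
      = 4 * x * (x + 1) * (y + 1)^2 * (2 * x - 2 * y + 1) * (2 * x - 2 * y - 1) * (2 * x - 2 * y - 3) * w"
    unfolding w_def using nz by simp
  have "(y + 1)^2 * (2 * x - 2 * y + 1) * S_term (Suc n) (Suc j)
      = (x + 1 - y)^2 * (2 * y + 1) * S_term (Suc n) j"
    using S_term_Suc_col[of j "Suc n"] unfolding x_def y_def by (simp add: algebra_simps)
  also have "\<dots> = (y + 1)^2 * (2 * x - 2 * y + 1)
      * (4 * x * (x + 1) * (2 * y + 1) * (x + 1 - y)^2 * (2 * x - 2 * y - 1) * (2 * x - 2 * y - 3) * w)"
    unfolding F0 by algebra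
  finally have F1: "S_term (Suc n) (Suc j)
      = 4 * x * (x + 1) * (2 * y + 1) * (x + 1 - y)^2 * (2 * x - 2 * y - 1) * (2 * x - 2 * y - 3) * w"
    using nz by simp
  have "2 * (x + 1) * (2 * x - 2 * y - 1) * S_term n (Suc j) = (x - y)^2 * S_term (Suc n) (Suc j)"
    using S_term_Suc_row[of n "Suc j"] unfolding x_def y_def by (simp add: algebra_simps)
  also have "\<dots> = 2 * (x + 1) * (2 * x - 2 * y - 1)
      * (2 * x * (2 * y + 1) * (x - y)^2 * (x + 1 - y)^2 * (2 * x - 2 * y - 3) * w)"
    unfolding F1 by algebra
  finally have F2: "S_term n (Suc j)
      = (2 * x - 2 * y - 3) * (2 * x * (2 * y + 1) * (x - y)^2 * (x + 1 - y)^2 * w)"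
    using nz by simp
  have "2 * x * (2 * x - 2 * y - 3) * S_term (n - 1) (Suc j) = (x - 1 - y)^2 * S_term n (Suc j)"
    using S_term_Suc_row[of m "Suc j"] unfolding x_def y_def by (simp add: n algebra_simps)
  also have "\<dots> = 2 * x * (2 * x - 2 * y - 3)
      * ((2 * y + 1) * (x - 1 - y)^2 * (x - y)^2 * (x + 1 - y)^2 * w)"
    unfolding F2 by algebra
  finally have F3: "S_term (n - 1) (Suc j)
      = (2 * y + 1) * (x - 1 - y)^2 * (x - y)^2 * (x + 1 - y)^2 * w"
    using nz by simp
  have "2 * (x + 1) * (2 * x - 2 * y + 1) * S_term n j = (x + 1 - y)^2 * S_term (Suc n) j"
    using S_term_Suc_row[of n j] unfolding x_def y_def by (simp add: algebra_simps)
  also have "\<dots> = 2 * (x + 1) * (2 * x - 2 * y + 1)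
      * (2 * x * (y + 1)^2 * (x + 1 - y)^2 * (2 * x - 2 * y - 1) * (2 * x - 2 * y - 3) * w)"
    unfolding F0 by algebra
  finally have F4: "S_term n j
      = (2 * x - 2 * y - 1) * (2 * x * (y + 1)^2 * (x + 1 - y)^2 * (2 * x - 2 * y - 3) * w)"
    using nz by simp
  have shift: "real (Suc j) = y + 1" "2 * x - 2 * (y + 1) - 1 = 2 * x - 2 * y - 3"
    unfolding y_def by simp_all
  show ?thesis
    unfolding S_certificate_def x_def[symmetric] y_def[symmetric] F1 F2 F3 F4 shift
      mult_times_div_cancel[OF nz(5)] mult_times_div_cancel[OF nz(6)]
    by algebra
qed

lemma of_int_S: "n \<le> K \<Longrightarrow> real_of_int (S n) = (\<Sum>k\<le>K. S_term n k)"
proof -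
  assume "n \<le> K"
  have "real_of_int (S n) = (\<Sum>k\<le>n. S_term n k)"
    unfolding S_def S_term_def atLeast0AtMost by simp
  also have "\<dots> = (\<Sum>k\<le>K. S_term n k)"
    using \<open>n \<le> K\<close> by (intro sum.mono_neutral_left) (auto simp: S_term_eq_0)
  finally show ?thesis .
qed

lemma S_recurrence:
  assumes "n \<ge> 1"
  shows "(int n + 1)^2 * S (Suc n)
    = 4 * (3 * (int n)^2 + 3 * int n + 1) * S n - 32 * (int n)^2 * S (n - 1)"
proof -
  let ?L = "\<lambda>k. (real n + 1)^2 * S_term (Suc n) k
     - 4 * (3 * (real n)^2 + 3 * real n + 1) * S_term n k + 32 * (real n)^2 * S_term (n - 1) k"
  have "real_of_int ((int n + 1)^2 * S (Suc n) - 4 * (3 * (int n)^2 + 3 * int n + 1) * S n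
      + 32 * (int n)^2 * S (n - 1)) = (\<Sum>k\<le>Suc n. ?L k)"
    by (simp add: of_int_S[of _ "Suc n"] sum_distrib_left sum.distrib sum_subtractf
        del: sum.atMost_Suc)
  also have "\<dots> = ?L 0 + (\<Sum>j<Suc n. ?L (Suc j))"
    unfolding sum.atMost_Suc_shift lessThan_Suc_atMost ..
  also have "\<dots> = S_certificate n 0 + (\<Sum>j<Suc n. S_certificate n (Suc j) - S_certificate n j)"
    using S_term_recurrence_0 S_term_recurrence_Suc assms by simp
  also have "\<dots> = S_certificate n (Suc n)"
    by (simp add: sum_lessThan_telescope)
  also have "\<dots> = 0"
    unfolding S_certificate_def by (simp add: S_term_eq_0)
  finally show ?thesis by linarith
qed

theorem lemma3p1:
  fixes m n :: nat
  assumes "m > 0" and "n > 0"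
  shows "[S (m*n + 1) = 4 * int (m*n + 1) * S (m*n)] (mod (int m)^2 * (int n)^2)"
proof -
  define N where "N = m * n"
  define D where "D = S (Suc N) - 4 * (int N + 1) * S N"
  have "N \<ge> 1" unfolding N_def using assms by simp
  have "(int N + 1)^2 * D = (int N + 1)^2 * S (Suc N) - 4 * (int N + 1)^3 * S N"
    unfolding D_def by algebra
  also have "\<dots> = (int N)^2 * (- 4 * int N * S N - 32 * S (N - 1))"
    unfolding S_recurrence[OF \<open>N \<ge> 1\<close>] by algebra
  finally have "(int N + 1)^2 * D = (int N)^2 * (- 4 * int N * S N - 32 * S (N - 1))" .
  then have "(int N)^2 dvd (int N + 1)^2 * D" by simp
  moreover have "coprime ((int N)^2) ((int N + 1)^2)" by simp
  ultimately have "(int N)^2 dvd D"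
    using coprime_dvd_mult_right_iff by blast
  moreover have "m * n + 1 = Suc N" "int (m * n + 1) = int N + 1" "m * n = N"
    "(int m)^2 * (int n)^2 = (int N)^2"
    unfolding N_def by (simp_all add: power_mult_distrib)
  ultimately show ?thesis
    unfolding cong_iff_dvd_diff D_def by (simp only:)
qed

end
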